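(* Let $N$ be a nonnegative integer and let $f,a_1,p,d_1,d_2\in\mathbb{C}$ be such that every hypergeometric series below is well defined (no lower parameter is a nonpositive integer) and all denominators in the definitions of $h$ and $k$ below are nonzero. Put $$h=\frac{p(f-1-d_1-d_2+N)(p-f+1)}{p(f-p-1)-a_1(2f-2-d_1-d_2-a_1+N)},\qquad k=\frac{h(1+d_1+a_1-f)(1+d_2+a_1-f)}{d_1d_2-h(1+d_1+d_2+a_1-f)}.$$ Then $$ {}_{9}F_{8}\left[\begin{matrix} f-1,\ \frac{f+1}{2},\ a_1,\ f-p,\ p+1,\ d_1,\ d_2,\ 2f-2-d_1-d_2-a_1+N,\ -N\\ \frac{f-1}{2},\ f-a_1,\ p,\ f-p-1,\ f-d_1,\ f-d_2,\ 2+a_1+d_1+d_2-f-N,\ f+N\end{matrix};1\right]$$ $$=\frac{(f)_N\,(f-d_1-d_2)_N\,(f-a_1-d_1-1)_N\,(f-a_1-d_2-1)_N}{(f-d_1)_N\,(f-d_2)_N\,(f-a_1)_N\,(f-a_1-d_1-d_2-1)_N}\cdot\frac{(k+1)_N}{(k)_N}.$$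
   Context: $(x)_n$ denotes the Pochhammer symbol: $(x)_0=1$, $(x)_n=x(x+1)\cdots(x+n-1)$ for $n\ge1$. The generalized hypergeometric function is $${}_{r+1}F_{r}\left[\begin{matrix} a_1,\dots,a_{r+1}\\ b_1,\dots,b_r\end{matrix};z\right]=\sum_{n=0}^{\infty}\frac{(a_1)_n\cdots(a_{r+1})_n}{(b_1)_n\cdots(b_r)_n\,n!}z^n ,$$ where no $b_i$ is a nonpositive integer; when one upper parameter equals $-N$ with $N$ a nonnegative integer the series terminates. *)

theory Defs
  imports Complex_Main
begin

definition hyp_term :: "complex list \<Rightarrow> complex list \<Rightarrow> complex \<Rightarrow> nat \<Rightarrow> complex" where
  "hyp_term as bs z n =
     (\<Prod>a\<leftarrow>as. pochhammer a n) / ((\<Prod>b\<leftarrow>bs. pochhammer b n) * of_nat (fact n)) * z ^ n"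

definition hypF :: "complex list \<Rightarrow> complex list \<Rightarrow> complex \<Rightarrow> complex" where
  "hypF as bs z = (\<Sum>n. hyp_term as bs z n)"

definition nonpos_int :: "complex \<Rightarrow> bool" where
  "nonpos_int x \<longleftrightarrow> (\<exists>m::nat. x = - of_nat m)"

end

theory Submission
  imports Defs
begin

text \<open>Write \<open>a = f - 1\<close> and \<open>e = 2f - 2 - d\<^sub>1 - d\<^sub>2 - a\<^sub>1 + N\<close>. Without the pair
  \<open>(p + 1, f - p)/(p, f - p - 1)\<close> the series is a very-well-poised \<open>\<^sub>7F\<^sub>6\<close>, and that pair
  multiplies its \<open>n\<close>-th term by \<open>1 + n (n + a)/(p (a - p))\<close>. Raising \<open>e\<close> or \<open>a\<^sub>1\<close> by one
  multiplies the term by the same expression with \<open>p\<close> replaced by \<open>e\<close> or \<open>a\<^sub>1\<close>, and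
  both shifted series are balanced, so Dougall's summation evaluates them. Since \<open>1/(p (a - p))\<close>
  is an affine combination of \<open>1/(e (a - e))\<close> and \<open>1/(a\<^sub>1 (a - a\<^sub>1))\<close>, the \<open>\<^sub>9F\<^sub>8\<close> is the
  same affine combination of two Dougall products, which simplifies to the stated closed form with
  \<open>(k + 1)\<^sub>N/(k)\<^sub>N = (k + N)/k\<close>. Dougall's formula itself is proved by induction on the length
  with a Wilf--Zeilberger certificate. These steps need the parameters to stay away from the
  integers; the general case follows by perturbing \<open>f, a\<^sub>1, d\<^sub>1, d\<^sub>2\<close> and continuity of both
  sides.\<close>

lemma pochhammer_add1_mult: "pochhammer (x + 1) n * x = pochhammer x n * (x + of_nat n)"
  using pochhammer_rec[of x n] pochhammer_rec'[of x n] by (simp add: mult_ac)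

lemma pochhammer_add1_ratio:
  fixes x :: complex
  assumes "x \<noteq> 0" "pochhammer x n \<noteq> 0"
  shows "pochhammer (x + 1) n / pochhammer x n = (x + of_nat n) / x"
  using pochhammer_add1_mult[of x n] assms by (simp add: field_simps)

section \<open>Dougall's terminating very-well-poised summation\<close>

definition vwp5 :: "complex \<Rightarrow> complex \<Rightarrow> complex \<Rightarrow> complex \<Rightarrow> nat \<Rightarrow> complex" where
  "vwp5 a b c d n =
     pochhammer a n * pochhammer (1 + a/2) n * pochhammer b n * pochhammer c n * pochhammer d n /
     (pochhammer 1 n * pochhammer (a/2) n * pochhammer (1+a-b) n * pochhammer (1+a-c) n
      * pochhammer (1+a-d) n)"

definition wp_pair :: "complex \<Rightarrow> complex \<Rightarrow> complex \<Rightarrow> nat \<Rightarrow> complex" where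
  "wp_pair a e M n = pochhammer e n * pochhammer (-M) n / (pochhammer (1+a-e) n * pochhammer (1+a+M) n)"

text \<open>The term of Dougall's \<open>\<^sub>7F\<^sub>6\<close>: the fifth numerator parameter \<open>e\<close> is fixed by the
  balancing condition \<open>1 + 2a = b + c + d + e - M\<close>.\<close>

definition dougall_term :: "complex \<Rightarrow> complex \<Rightarrow> complex \<Rightarrow> complex \<Rightarrow> nat \<Rightarrow> nat \<Rightarrow> complex" where
  "dougall_term a b c d M n = vwp5 a b c d n * wp_pair a (1 + 2*a - b - c - d + of_nat M) (of_nat M) n"

definition dougall_value :: "complex \<Rightarrow> complex \<Rightarrow> complex \<Rightarrow> complex \<Rightarrow> nat \<Rightarrow> complex" where
  "dougall_value a b c d M =
     pochhammer (1+a) M * pochhammer (1+a-b-c) M * pochhammer (1+a-b-d) M * pochhammer (1+a-c-d) M /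
     (pochhammer (1+a-b) M * pochhammer (1+a-c) M * pochhammer (1+a-d) M * pochhammer (1+a-b-c-d) M)"

lemma vwp5_Suc:
  "vwp5 a b c d (Suc n) = vwp5 a b c d n *
     ((a+of_nat n)*(a+2*of_nat n+2)*(b+of_nat n)*(c+of_nat n)*(d+of_nat n) /
      ((of_nat n+1)*(a+2*of_nat n)*(a-b+of_nat n+1)*(a-c+of_nat n+1)*(a-d+of_nat n+1)))"
proof -
  have half: "(1 + a/2 + of_nat n) / (a/2 + of_nat n) = (a+2*of_nat n+2) / (a+2*of_nat n)"
  proof -
    have halves: "(x/2)/(y/2) = x/(y::complex)" for x y by (cases "y=0") (simp_all add: field_simps)
    have double: "1 + a/2 + of_nat n = (a+2*of_nat n+2)/2" "a/2 + of_nat n = (a+2*of_nat n)/2"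
      by (simp_all add: field_simps)
    show ?thesis unfolding double halves ..
  qed
  have shift: "1+a-b+of_nat n = a-b+of_nat n+1" "1+a-c+of_nat n = a-c+of_nat n+1"
    "1+a-d+of_nat n = a-d+of_nat n+1" "1 + of_nat n = (of_nat n + 1::complex)"
    by (simp_all add: field_simps)
  have regroup: "(q1*p1)*(q2*p2)*(q3*p3)*(q4*p4)*(q5*p5) / ((s1*r1)*(s2*r2)*(s3*r3)*(s4*r4)*(s5*r5))
    = (p1*p2*p3*p4*p5)/(r1*r2*r3*r4*r5) * ((q1*q2*q3*q4*q5)/(s1*s2*s3*s4*s5))"
    for p1 p2 p3 p4 p5 q1 q2 q3 q4 q5 r1 r2 r3 r4 r5 s1 s2 s3 s4 s5 :: complex
    by (simp add: divide_inverse inverse_mult_distrib mult_ac)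
  have split: "(x1*x2*x3*x4*x5)/(y1*y2*y3*y4*y5) = (x1/y1)*(x2/y2)*(x3/y3)*(x4/y4)*(x5/y5)"
    for x1 x2 x3 x4 x5 y1 y2 y3 y4 y5 :: complex
    by (simp add: divide_inverse inverse_mult_distrib mult_ac)
  show ?thesis
    unfolding vwp5_def pochhammer_rec' regroup shift split[of "a+of_nat n"] half ..
qed

lemma wp_pair_Suc:
  "wp_pair a e M (Suc n) = wp_pair a e M n *
     ((e+of_nat n)*(-M+of_nat n) / ((1+a-e+of_nat n)*(1+a+M+of_nat n)))"
  unfolding wp_pair_def pochhammer_rec' by (simp add: divide_inverse inverse_mult_distrib mult_ac)

definition dougall_factor :: "complex \<Rightarrow> complex \<Rightarrow> complex \<Rightarrow> complex \<Rightarrow> nat \<Rightarrow> complex" where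
  "dougall_factor a b c d M =
     (1+a+of_nat M)*(1+a-b-c+of_nat M)*(1+a-b-d+of_nat M)*(1+a-c-d+of_nat M) /
     ((1+a-b+of_nat M)*(1+a-c+of_nat M)*(1+a-d+of_nat M)*(1+a-b-c-d+of_nat M))"

lemma dougall_value_Suc:
  "dougall_value a b c d (Suc M) = dougall_value a b c d M * dougall_factor a b c d M"
  unfolding dougall_value_def dougall_factor_def pochhammer_rec'
  by (simp add: divide_inverse inverse_mult_distrib mult_ac)

lemma wp_pair_lower:
  fixes a e M :: complex
  assumes "e + of_nat n \<noteq> 0" "M + 1 \<noteq> 0" "a - e \<noteq> 0" "1 + a + M \<noteq> 0" "1 + a + M + of_nat n \<noteq> 0"
  shows "wp_pair a e M n = wp_pair a (e+1) (M+1) n *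
     (e*(a-e)*(M+1-of_nat n)*(1+a+M+of_nat n) / ((e+of_nat n)*(a-e+of_nat n)*(M+1)*(1+a+M)))"
proof -
  have e: "pochhammer e n = e * pochhammer (e+1) n / (e + of_nat n)"
    using pochhammer_add1_mult[of e n] assms(1) by (simp add: field_simps)
  have M: "pochhammer (-M) n = (M+1-of_nat n) * pochhammer (-(M+1)) n / (M+1)"
  proof -
    have "pochhammer (-(M+1)+1) n * (-(M+1)) = pochhammer (-(M+1)) n * (-(M+1) + of_nat n)"
      by (rule pochhammer_add1_mult)
    then have "pochhammer (-M) n * (M+1) = pochhammer (-(M+1)) n * (M+1 - of_nat n)"
      by (simp add: algebra_simps)
    then show ?thesis using assms(2) by (simp add: field_simps)
  qed
  have ae: "pochhammer (1+a-e) n = (a-e+of_nat n) * pochhammer (a-e) n / (a-e)"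
    using pochhammer_add1_mult[of "a-e" n] assms(3) by (simp add: field_simps add_ac)
  have aM: "pochhammer (1+a+M) n = (1+a+M) * pochhammer (1+a+(M+1)) n / (1+a+M+of_nat n)"
    using pochhammer_add1_mult[of "1+a+M" n] assms(5) by (simp add: field_simps add_ac)
  have "1+a-(e+1) = a-e" by simp
  then show ?thesis unfolding wp_pair_def e M ae aM
    by (simp add: divide_inverse inverse_mult_distrib mult_ac)
qed

lemma dougall_wz_polynomial_identity:
  fixes a b c d e M m :: complex
  assumes "e = 1+2*a-b-c-d+M"
  shows "(1+a-b+M)*(1+a-c+M)*(1+a-d+M)*(e-a)*((a+2*m)*(a-e+m)*(e+m)*(M+1))
       - e*(a-e)*(M+1-m)*(1+a+M+m) * ((a+2*m)*(e-a+b)*(e-a+c)*(e-a+d))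
     = (a+m)*(b+m)*(c+m)*(d+m)*(m-M-1)*(a-e)*(e+M+1) * (e+m)
       - (a-e)*(1+a+M+m)*m*(a-b+m)*(a-c+m)*(a-d+m)*(e+M+1) * (a-e+m)"
  using assms by algebra

text \<open>Wilf--Zeilberger certificate of Dougall's sum in the length \<open>M\<close>.\<close>

definition dougall_cert :: "complex \<Rightarrow> complex \<Rightarrow> complex \<Rightarrow> complex \<Rightarrow> nat \<Rightarrow> nat \<Rightarrow> complex" where
  "dougall_cert a b c d M n =
     (let e = 1+2*a-b-c-d+of_nat M; m = of_nat n in
      (a-e)*(1+a+of_nat M+m)*m*(a-b+m)*(a-c+m)*(a-d+m)*(e+of_nat M+1) /
      ((e+m)*(of_nat M+1)*(1+a+of_nat M)*(a+2*m)*(e-a+b)*(e-a+c)*(e-a+d)))"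

lemma dougall_wz_identity:
  fixes a b c d e M m :: complex
  assumes e: "e = 1+2*a-b-c-d+M"
    and nz: "1+a+M \<noteq> 0" "e-a+b \<noteq> 0" "e-a+c \<noteq> 0" "e-a+d \<noteq> 0" "e+m \<noteq> 0" "a-e+m \<noteq> 0"
      "M+1 \<noteq> 0" "a+2*m \<noteq> 0" "a+2*m+2 \<noteq> 0" "e+m+1 \<noteq> 0" "m+1 \<noteq> 0" "a-b+m+1 \<noteq> 0"
      "a-c+m+1 \<noteq> 0" "a-d+m+1 \<noteq> 0" "a+M+m+2 \<noteq> 0"
  defines "Q \<equiv> \<lambda>m. (a-e)*(1+a+M+m)*m*(a-b+m)*(a-c+m)*(a-d+m)*(e+M+1) /
                  ((e+m)*(M+1)*(1+a+M)*(a+2*m)*(e-a+b)*(e-a+c)*(e-a+d))"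
  shows "(1+a-b+M)*(1+a-c+M)*(1+a-d+M)*(e-a) / ((1+a+M)*(e-a+b)*(e-a+c)*(e-a+d))
       - e*(a-e)*(M+1-m)*(1+a+M+m) / ((e+m)*(a-e+m)*(M+1)*(1+a+M))
     = (a+m)*(a+2*m+2)*(b+m)*(c+m)*(d+m) / ((m+1)*(a+2*m)*(a-b+m+1)*(a-c+m+1)*(a-d+m+1))
       * ((e+1+m)*(-(M+1)+m) / ((1+a-(e+1)+m)*(1+a+(M+1)+m)))
       * Q (m+1) - Q m"
    (is "?K - ?s = ?X1 * ?X2 * _ - _")
proof -
  define Z where "Z = (a+m)*(b+m)*(c+m)*(d+m)*(m-M-1)*(a-e)*(e+M+1)"
  define W where "W = (a+2*m)*(a-e+m)*(M+1)*(1+a+M)*(e-a+b)*(e-a+c)*(e-a+d)"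
  define D where "D = (a+2*m)*(a-e+m)*(e+m)*(M+1)*(1+a+M)*(e-a+b)*(e-a+c)*(e-a+d)"
  have W: "W \<noteq> 0" and D: "D \<noteq> 0" unfolding W_def D_def using nz by simp_all
  have X: "?X1 * ?X2 * Q (m+1) = Z / W"
  proof -
    define C where "C = (a+2*m+2)*(e+m+1)*(m+1)*(a-b+m+1)*(a-c+m+1)*(a-d+m+1)*(a+M+m+2)"
    have shifts: "e+1+m = e+m+1" "-(M+1)+m = m-M-1" "1+a-(e+1)+m = a-e+m" "1+a+(M+1)+m = a+M+m+2"
      "1+a+M+(m+1) = a+M+m+2" "a-b+(m+1) = a-b+m+1" "a-c+(m+1) = a-c+m+1" "a-d+(m+1) = a-d+m+1"
      "e+(m+1) = e+m+1" "a+2*(m+1) = a+2*m+2" by (simp_all add: algebra_simps)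
    have "?X1 * ?X2 * Q (m+1) = (Z*C)/(W*C)"
      unfolding Q_def shifts times_divide_times_eq Z_def W_def C_def by (simp only: mult_ac)
    also have "\<dots> = Z/W" using nz unfolding C_def by simp
    finally show ?thesis .
  qed
  have K: "?K * D = (1+a-b+M)*(1+a-c+M)*(1+a-d+M)*(e-a)*((a+2*m)*(a-e+m)*(e+m)*(M+1))"
  proof -
    have "D = ((1+a+M)*(e-a+b)*(e-a+c)*(e-a+d)) * ((a+2*m)*(a-e+m)*(e+m)*(M+1))"
      unfolding D_def by (simp only: mult_ac)
    then show ?thesis using nz by simp
  qed
  have s: "?s * D = e*(a-e)*(M+1-m)*(1+a+M+m) * ((a+2*m)*(e-a+b)*(e-a+c)*(e-a+d))"
  proof -
    have "D = ((e+m)*(a-e+m)*(M+1)*(1+a+M)) * ((a+2*m)*(e-a+b)*(e-a+c)*(e-a+d))"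
      unfolding D_def by (simp only: mult_ac)
    then show ?thesis using nz by simp
  qed
  have ZW: "Z / W * D = Z * (e+m)"
  proof -
    have "D = W * (e+m)" unfolding D_def W_def by (simp only: mult_ac)
    then show ?thesis using W by simp
  qed
  have Qm: "Q m * D = (a-e)*(1+a+M+m)*m*(a-b+m)*(a-c+m)*(a-d+m)*(e+M+1) * (a-e+m)"
  proof -
    have "D = ((e+m)*(M+1)*(1+a+M)*(a+2*m)*(e-a+b)*(e-a+c)*(e-a+d)) * (a-e+m)"
      unfolding D_def by (simp only: mult_ac)
    then show ?thesis unfolding Q_def using nz by simp
  qed
  have "(?K - ?s) * D = ?K * D - ?s * D" by (rule left_diff_distrib)
  also have "\<dots> = Z / W * D - Q m * D"
    unfolding K s ZW Qm unfolding Z_def by (rule dougall_wz_polynomial_identity[OF e])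
  also have "\<dots> = (?X1 * ?X2 * Q (m+1) - Q m) * D" unfolding X by (rule left_diff_distrib[symmetric])
  finally show ?thesis using D by simp
qed

definition avoids_ints :: "complex list \<Rightarrow> nat \<Rightarrow> bool" where
  "avoids_ints xs L \<longleftrightarrow> (\<forall>x\<in>set xs. \<forall>i::int. \<bar>i\<bar> \<le> int L \<longrightarrow> x + of_int i \<noteq> 0)"

lemma avoids_intsD:
  assumes "avoids_ints xs L" "x \<in> set xs" "\<bar>i\<bar> \<le> int L" "y = x + of_int i \<or> y = -(x + of_int i)"
  shows "y \<noteq> 0"
  using assms unfolding avoids_ints_def by (metis add.inverse_neutral minus_equation_iff)

lemma avoids_ints_pochhammer:
  assumes "avoids_ints xs L" "x \<in> set xs" "y = x + of_int k" "\<bar>k\<bar> + int n \<le> int L"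
  shows "pochhammer y n \<noteq> 0"
proof
  assume "pochhammer y n = 0"
  then obtain j where j: "j < n" "y = - of_nat j" by (auto simp: pochhammer_eq_0_iff)
  have "\<bar>k + int j\<bar> \<le> int L" using abs_triangle_ineq[of k "int j"] j(1) assms(4) by simp
  then have "x + of_int (k + int j) \<noteq> 0" using assms(1,2) unfolding avoids_ints_def by blast
  moreover have "x + of_int (k + int j) = y + of_nat j" using assms(3) by simp
  ultimately show False using j(2) by simp
qed

lemma avoids_ints_mono:
  "set ys \<subseteq> set xs \<Longrightarrow> L \<le> L' \<Longrightarrow> avoids_ints xs L' \<Longrightarrow> avoids_ints ys L"
  unfolding avoids_ints_def by force

lemma avoids_ints_minus1: "avoids_ints xs (Suc L) \<Longrightarrow> avoids_ints (xs @ map (\<lambda>x. x - 1) xs) L"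
  unfolding avoids_ints_def
proof (intro ballI allI impI)
  fix y i assume avoid: "\<forall>x\<in>set xs. \<forall>i. \<bar>i\<bar> \<le> int (Suc L) \<longrightarrow> x + of_int i \<noteq> 0"
    and y: "y \<in> set (xs @ map (\<lambda>x. x - 1) xs)" and i: "\<bar>i\<bar> \<le> int L"
  show "y + of_int i \<noteq> 0"
  proof (cases "y \<in> set xs")
    case True
    then show ?thesis using avoid i by simp
  next
    case False
    then obtain x where x: "x \<in> set xs" "y = x - 1" using y by auto
    have "\<bar>i - 1\<bar> \<le> int (Suc L)" using i by simp
    then have "x + of_int (i - 1) \<noteq> 0" using avoid x(1) by blast
    moreover have "x + of_int (i - 1) = y + of_int i" using x(2) by (simp add: algebra_simps)
    ultimately show ?thesis by metis
  qed
qed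

lemma dougall_wz_step:
  assumes avoid: "avoids_ints [a, a-b, a-c, a-d, a-b-c, a-b-d, a-c-d, a-b-c-d, 2*a-b-c-d] L"
    and L: "2*N + 6 \<le> L" and n: "n \<le> Suc N"
  shows "dougall_term a b c d (Suc N) n / dougall_factor a b c d N - dougall_term a b c d N n
       = dougall_term a b c d (Suc N) (Suc n) * dougall_cert a b c d N (Suc n)
         - dougall_term a b c d (Suc N) n * dougall_cert a b c d N n"
proof -
  define M where "M = (of_nat N :: complex)"
  define m where "m = (of_nat n :: complex)"
  define e where "e = 1+2*a-b-c-d+M"
  define Q where "Q m = (a-e)*(1+a+M+m)*m*(a-b+m)*(a-c+m)*(a-d+m)*(e+M+1) /
                  ((e+m)*(M+1)*(1+a+M)*(a+2*m)*(e-a+b)*(e-a+c)*(e-a+d))" for m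
  define T where "T k = vwp5 a b c d k * wp_pair a (e+1) (M+1) k" for k
  have nz: "y \<noteq> 0" if "x \<in> set [a, a-b, a-c, a-d, a-b-c, a-b-d, a-c-d, a-b-c-d, 2*a-b-c-d]"
    "\<bar>i\<bar> \<le> int L" "y = x + of_int i \<or> y = -(x + of_int i)" for x i y
    using avoids_intsD[OF avoid that] .
  have M1: "M + 1 \<noteq> 0" unfolding M_def by (metis of_nat_Suc add.commute of_nat_eq_0_iff nat.simps(3))
  have m1: "m + 1 \<noteq> 0" unfolding m_def by (metis of_nat_Suc add.commute of_nat_eq_0_iff nat.simps(3))
  have c1: "1+a+M \<noteq> 0" by (rule nz[of a "1+N"]) (use L in \<open>auto simp: M_def algebra_simps\<close>)
  have c2: "e-a+b \<noteq> 0"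
    by (rule nz[of "a-c-d" "1+N"]) (use L in \<open>auto simp: M_def e_def algebra_simps\<close>)
  have c3: "e-a+c \<noteq> 0"
    by (rule nz[of "a-b-d" "1+N"]) (use L in \<open>auto simp: M_def e_def algebra_simps\<close>)
  have c4: "e-a+d \<noteq> 0"
    by (rule nz[of "a-b-c" "1+N"]) (use L in \<open>auto simp: M_def e_def algebra_simps\<close>)
  have c5: "a-e \<noteq> 0"
    by (rule nz[of "a-b-c-d" "1+N"]) (use L in \<open>auto simp: M_def e_def algebra_simps\<close>)
  have n1: "e+m \<noteq> 0"
    by (rule nz[of "2*a-b-c-d" "1+N+n"]) (use L n in \<open>auto simp: m_def M_def e_def algebra_simps\<close>)
  have n2: "a-e+m \<noteq> 0"
    by (rule nz[of "a-b-c-d" "int (1+N) - int n"])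
      (use L n in \<open>auto simp: m_def M_def e_def algebra_simps\<close>)
  have n3: "a+2*m \<noteq> 0" by (rule nz[of a "2*n"]) (use L n in \<open>auto simp: m_def algebra_simps\<close>)
  have n4: "a+2*m+2 \<noteq> 0" by (rule nz[of a "2*n+2"]) (use L n in \<open>auto simp: m_def algebra_simps\<close>)
  have n5: "e+m+1 \<noteq> 0"
    by (rule nz[of "2*a-b-c-d" "2+N+n"]) (use L n in \<open>auto simp: m_def M_def e_def algebra_simps\<close>)
  have n6: "a-b+m+1 \<noteq> 0" by (rule nz[of "a-b" "1+n"]) (use L n in \<open>auto simp: m_def algebra_simps\<close>)
  have n7: "a-c+m+1 \<noteq> 0" by (rule nz[of "a-c" "1+n"]) (use L n in \<open>auto simp: m_def algebra_simps\<close>)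
  have n8: "a-d+m+1 \<noteq> 0" by (rule nz[of "a-d" "1+n"]) (use L n in \<open>auto simp: m_def algebra_simps\<close>)
  have n9: "a+M+m+2 \<noteq> 0"
    by (rule nz[of a "2+N+n"]) (use L n in \<open>auto simp: m_def M_def algebra_simps\<close>)
  have n10: "1+a+M+m \<noteq> 0"
    by (rule nz[of a "1+N+n"]) (use L n in \<open>auto simp: m_def M_def algebra_simps\<close>)
  have T_Suc: "dougall_term a b c d (Suc N) = T"
  proof -
    have Suc_N: "of_nat (Suc N) = M + 1" and e_Suc: "1+2*a-b-c-d+(M+1) = e+1"
      by (simp_all add: e_def M_def)
    show ?thesis unfolding dougall_term_def T_def Suc_N e_Suc ..
  qed
  define K where "K = (1+a-b+M)*(1+a-c+M)*(1+a-d+M)*(e-a) / ((1+a+M)*(e-a+b)*(e-a+c)*(e-a+d))"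
  define s where "s = e*(a-e)*(M+1-m)*(1+a+M+m) / ((e+m)*(a-e+m)*(M+1)*(1+a+M))"
  define X where "X = (a+m)*(a+2*m+2)*(b+m)*(c+m)*(d+m) / ((m+1)*(a+2*m)*(a-b+m+1)*(a-c+m+1)*(a-d+m+1))
                      * ((e+1+m)*(-(M+1)+m) / ((1+a-(e+1)+m)*(1+a+(M+1)+m)))"
  have wz: "K - s = X * Q (m+1) - Q m"
    unfolding K_def s_def X_def Q_def
    by (rule dougall_wz_identity[OF e_def c1 c2 c3 c4 n1 n2 M1 n3 n4 n5 m1 n6 n7 n8 n9])
  have T_N: "dougall_term a b c d N n = T n * s"
  proof -
    have "dougall_term a b c d N n = vwp5 a b c d n * wp_pair a e M n"
      by (simp add: dougall_term_def e_def M_def)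
    then show ?thesis
      unfolding wp_pair_lower[OF n1[unfolded m_def] M1 c5 c1 n10[unfolded m_def]] T_def s_def m_def
      by (simp only: mult.assoc)
  qed
  have T_next: "T (Suc n) = T n * X"
    unfolding T_def X_def vwp5_Suc wp_pair_Suc m_def by (simp only: mult_ac)
  have cert: "dougall_cert a b c d N n = Q m" "dougall_cert a b c d N (Suc n) = Q (m+1)"
  proof -
    have "of_nat (Suc n) = m + 1" by (simp add: m_def)
    then show "dougall_cert a b c d N n = Q m" "dougall_cert a b c d N (Suc n) = Q (m+1)"
      unfolding dougall_cert_def Let_def Q_def M_def[symmetric] e_def[symmetric] m_def[symmetric]
      by (simp_all add: ac_simps)
  qed
  have factor: "x / dougall_factor a b c d N = K * x" for x
  proof -
    have ea: "e-a = 1+a-b-c-d+M"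
      and eabcd: "e-a+b = 1+a-c-d+M" "e-a+c = 1+a-b-d+M" "e-a+d = 1+a-b-c+M"
      by (simp_all add: e_def algebra_simps)
    show ?thesis unfolding K_def eabcd unfolding ea dougall_factor_def M_def[symmetric]
      by (simp only: divide_divide_eq_right times_divide_eq_left times_divide_eq_right mult_ac)
  qed
  have "K * T n - T n * s = T n * (K - s)" by (simp add: algebra_simps)
  also have "\<dots> = T n * X * Q (m+1) - T n * Q m" unfolding wz by (simp add: algebra_simps)
  finally show ?thesis unfolding T_Suc T_N T_next cert factor .
qed

lemma dougall_contiguous:
  assumes avoid: "avoids_ints [a, a-b, a-c, a-d, a-b-c, a-b-d, a-c-d, a-b-c-d, 2*a-b-c-d] L"
    and L: "2*N + 6 \<le> L"
  shows "(\<Sum>n\<le>Suc N. dougall_term a b c d (Suc N) n)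
       = dougall_factor a b c d N * (\<Sum>n\<le>N. dougall_term a b c d N n)"
proof -
  let ?F = "dougall_factor a b c d N"
  define G where "G n = dougall_term a b c d (Suc N) n * dougall_cert a b c d N n" for n
  have nz: "1 + x + of_nat N \<noteq> 0"
    if "x \<in> set [a, a-b, a-c, a-d, a-b-c, a-b-d, a-c-d, a-b-c-d, 2*a-b-c-d]" for x
    using avoids_intsD[OF avoid that, of "1 + int N" "1 + x + of_nat N"] L by (simp add: add_ac)
  have "?F \<noteq> 0"
    using nz[of a] nz[of "a-b"] nz[of "a-c"] nz[of "a-d"] nz[of "a-b-c"] nz[of "a-b-d"] nz[of "a-c-d"]
      nz[of "a-b-c-d"]
    unfolding dougall_factor_def by (simp add: add_diff_eq)
  have last_vanishes:
      "dougall_term a b c d N (Suc N) = 0" "dougall_term a b c d (Suc N) (Suc (Suc N)) = 0"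
    unfolding dougall_term_def wp_pair_def
    by (simp_all add: pochhammer_of_nat_eq_0_lemma del: of_nat_Suc)
  have "(\<Sum>n\<le>Suc N. dougall_term a b c d (Suc N) n) / ?F - (\<Sum>n\<le>N. dougall_term a b c d N n)
      = (\<Sum>n\<le>Suc N. dougall_term a b c d (Suc N) n / ?F - dougall_term a b c d N n)"
    by (simp only: sum_subtractf sum_divide_distrib[symmetric] sum.atMost_Suc[of "dougall_term a b c d N"]
        last_vanishes add_0_right)
  also have "\<dots> = (\<Sum>n\<le>Suc N. G (Suc n) - G n)"
    unfolding G_def by (rule sum.cong) (auto intro: dougall_wz_step[OF avoid L])
  also have "\<dots> = G (Suc (Suc N)) - G 0"
    unfolding atMost_atLeast0 by (rule sum_Suc_diff) simp
  also have "\<dots> = 0"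
    unfolding G_def last_vanishes by (simp add: dougall_cert_def)
  finally have "(\<Sum>n\<le>Suc N. dougall_term a b c d (Suc N) n) / ?F = (\<Sum>n\<le>N. dougall_term a b c d N n)"
    by (rule right_minus_eq[THEN iffD1])
  then show ?thesis using \<open>?F \<noteq> 0\<close> by (simp add: divide_eq_eq)
qed

theorem dougall:
  assumes avoid: "avoids_ints [a, a-b, a-c, a-d, a-b-c, a-b-d, a-c-d, a-b-c-d, 2*a-b-c-d] L"
    and "2*M + 4 \<le> L"
  shows "(\<Sum>n\<le>M. dougall_term a b c d M n) = dougall_value a b c d M"
  using assms(2)
proof (induction M)
  case 0
  show ?case by (simp add: dougall_term_def vwp5_def wp_pair_def dougall_value_def)
next
  case (Suc N)
  have "(\<Sum>n\<le>Suc N. dougall_term a b c d (Suc N) n) = dougall_factor a b c d N * dougall_value a b c d N"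
    using dougall_contiguous[OF avoid] Suc by simp
  then show ?case by (simp add: dougall_value_Suc mult.commute)
qed

section \<open>The \<open>\<^sub>9F\<^sub>8\<close> as a combination of two Dougall sums\<close>

definition upper9 :: "complex \<Rightarrow> complex \<Rightarrow> complex \<Rightarrow> complex \<Rightarrow> complex \<Rightarrow> nat \<Rightarrow> complex list" where
  "upper9 f a1 p d1 d2 N =
     [f - 1, (f + 1) / 2, a1, f - p, p + 1, d1, d2, 2 * f - 2 - d1 - d2 - a1 + of_nat N, - of_nat N]"

definition lower9 :: "complex \<Rightarrow> complex \<Rightarrow> complex \<Rightarrow> complex \<Rightarrow> complex \<Rightarrow> nat \<Rightarrow> complex list" where
  "lower9 f a1 p d1 d2 N =
     [(f - 1) / 2, f - a1, p, f - p - 1, f - d1, f - d2, 2 + a1 + d1 + d2 - f - of_nat N, f + of_nat N]"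

lemma hyp_term_upper9_lower9:
  "hyp_term (upper9 f a1 p d1 d2 N) (lower9 f a1 p d1 d2 N) 1 n
   = vwp5 (f-1) a1 d1 d2 n * wp_pair (f-1) (2 * f - 2 - d1 - d2 - a1 + of_nat N) (of_nat N) n
     * (pochhammer (p+1) n * pochhammer (f-p) n / (pochhammer p n * pochhammer (f-p-1) n))"
proof -
  have params: "1 + (f-1)/2 = (f+1)/2" "1+(f-1)-a1 = f-a1" "1+(f-1)-d1 = f-d1" "1+(f-1)-d2 = f-d2"
    "1+(f-1)-(2 * f - 2 - d1 - d2 - a1 + of_nat N) = 2 + a1 + d1 + d2 - f - of_nat N"
    "1+(f-1)+of_nat N = f + of_nat N"
    by (simp_all add: field_simps)
  have regroup: "(x1*(x2*(x3*(x4*(x5*(x6*(x7*(x8*x9))))))))/((y1*(y2*(y3*(y4*(y5*(y6*(y7*y8)))))))*F)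
     = (x1*x2*x3*x6*x7)/(F*y1*y2*y5*y6) * (x8*x9/(y7*y8)) * (x5*x4/(y3*y4))"
    for x1 x2 x3 x4 x5 x6 x7 x8 x9 y1 y2 y3 y4 y5 y6 y7 y8 F :: complex
    by (simp add: divide_inverse inverse_mult_distrib mult_ac)
  have "(of_nat (fact n) :: complex) = pochhammer 1 n" by (metis of_nat_fact pochhammer_fact)
  then show ?thesis unfolding hyp_term_def upper9_def lower9_def vwp5_def wp_pair_def params
    by (simp only: list.map prod_list.Cons prod_list.Nil mult_1_right power_one regroup)
qed

lemma shifted_product_ratio:
  fixes x a t :: "'a::field"
  assumes "x \<noteq> 0" "a - x \<noteq> 0"
  shows "(x + t) * (a - x + t) / (x * (a - x)) = 1 + t * (t + a) / (x * (a - x))"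
  using assms by (simp add: field_simps)

lemma vwp5_b_plus1:
  fixes a b c d :: complex
  assumes "b \<noteq> 0" "a - b + of_nat n \<noteq> 0"
  shows "vwp5 a (b+1) c d n = vwp5 a b c d n * ((b + of_nat n)*(a-b+of_nat n) / (b*(a-b)))"
proof -
  have b: "pochhammer (b+1) n = pochhammer b n * (b + of_nat n) / b"
    using pochhammer_add1_mult[of b n] assms(1) by (simp add: field_simps)
  have ab: "pochhammer (1+a-(b+1)) n = pochhammer (1+a-b) n * (a-b) / (a-b+of_nat n)"
    using pochhammer_add1_mult[of "a-b" n] assms(2) by (simp add: field_simps add_ac)
  have regroup: "(x1*x2*(x3*u/v)*x4*x5)/(y1*y2*(y3*w/z)*y4*y5)
      = (x1*x2*x3*x4*x5)/(y1*y2*y3*y4*y5) * (u*z/(v*w))"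
    for x1 x2 x3 x4 x5 y1 y2 y3 y4 y5 u v w z :: complex
    by (simp add: divide_inverse inverse_mult_distrib mult_ac)
  show ?thesis unfolding vwp5_def b ab regroup by (simp only: mult_ac)
qed

lemma wp_pair_e_plus1:
  fixes a e M :: complex
  assumes "e \<noteq> 0" "a - e + of_nat n \<noteq> 0"
  shows "wp_pair a (e+1) M n = wp_pair a e M n * ((e + of_nat n)*(a-e+of_nat n) / (e*(a-e)))"
proof -
  have e: "pochhammer (e+1) n = pochhammer e n * (e + of_nat n) / e"
    using pochhammer_add1_mult[of e n] assms(1) by (simp add: field_simps)
  have ae: "pochhammer (1+a-(e+1)) n = pochhammer (1+a-e) n * (a-e) / (a-e+of_nat n)"
    using pochhammer_add1_mult[of "a-e" n] assms(2) by (simp add: field_simps add_ac)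
  have regroup: "((x1*u/v)*x2)/((y1*w/z)*y2) = (x1*x2)/(y1*y2) * (u*z/(v*w))"
    for x1 x2 y1 y2 u v w z :: complex
    by (simp add: divide_inverse inverse_mult_distrib mult_ac)
  show ?thesis unfolding wp_pair_def e ae regroup by (simp only: mult_ac)
qed

definition affine_weight :: "'a::field \<Rightarrow> 'a \<Rightarrow> 'a \<Rightarrow> 'a" where
  "affine_weight u v w = w * (v - u) / (u * (v - w))"

text \<open>The weight solves \<open>1/u = \<lambda>/w + (1 - \<lambda>)/v\<close>.\<close>

lemma affine_weight_combination:
  fixes u v w t :: "'a::field"
  assumes "u \<noteq> 0" "v \<noteq> 0" "w \<noteq> 0" "v \<noteq> w"
  shows "1 + t/u = affine_weight u v w * (1 + t/w) + (1 - affine_weight u v w) * (1 + t/v)"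
proof -
  let ?c = "affine_weight u v w"
  define D where "D = u * (v - w)"
  have D: "D \<noteq> 0" unfolding D_def using assms by simp
  have "?c/w + (1 - ?c)/v = ((v - u) + (u - w)) / D"
    unfolding affine_weight_def D_def[symmetric] using D assms(2,3)
    by (simp add: field_simps) (simp add: D_def algebra_simps)
  also have "\<dots> = 1/u" unfolding D_def using assms by simp
  finally have weights: "?c/w + (1 - ?c)/v = 1/u" .
  have "?c * (1 + t/w) + (1 - ?c) * (1 + t/v) = 1 + t * (?c/w + (1 - ?c)/v)"
    by (simp add: algebra_simps diff_divide_distrib add_divide_distrib)
  then show ?thesis unfolding weights by simp
qed

lemma hyp_term_upper9_lower9_affine:
  fixes f a1 p d1 d2 :: complex and N n :: nat
  defines "a \<equiv> f - 1" and "e \<equiv> 2*f - 2 - d1 - d2 - a1 + of_nat N"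
  assumes p: "p \<noteq> 0" "pochhammer p n \<noteq> 0" "a - p \<noteq> 0" "pochhammer (a-p) n \<noteq> 0"
    and a1: "a1 \<noteq> 0" "a - a1 \<noteq> 0" "a - a1 + of_nat n \<noteq> 0"
    and e: "e \<noteq> 0" "a - e \<noteq> 0" "a - e + of_nat n \<noteq> 0"
    and w: "a1*(a-a1) \<noteq> e*(a-e)"
  shows "hyp_term (upper9 f a1 p d1 d2 N) (lower9 f a1 p d1 d2 N) 1 n
       = affine_weight (p*(a-p)) (a1*(a-a1)) (e*(a-e)) * dougall_term a a1 d1 d2 N n
         + (1 - affine_weight (p*(a-p)) (a1*(a-a1)) (e*(a-e))) * dougall_term a (a1+1) d1 d2 N n"
proof -
  define c where "c = affine_weight (p*(a-p)) (a1*(a-a1)) (e*(a-e))"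
  define W where "W = vwp5 a a1 d1 d2 n * wp_pair a e (of_nat N) n"
  define t where "t = (of_nat n :: complex)"
  have "pochhammer (p+1) n / pochhammer p n = (p + t)/p"
    and "pochhammer (a-p+1) n / pochhammer (a-p) n = (a-p+t)/(a-p)"
    unfolding t_def using pochhammer_add1_ratio p by blast+
  then have ratio: "pochhammer (p+1) n * pochhammer (a-p+1) n / (pochhammer p n * pochhammer (a-p) n)
      = (p+t)*(a-p+t)/(p*(a-p))"
    by (simp only: times_divide_times_eq[symmetric])
  have fp: "f - p - 1 = a - p" and fp1: "f - p = a - p + 1" by (simp_all add: a_def)
  have hyp: "hyp_term (upper9 f a1 p d1 d2 N) (lower9 f a1 p d1 d2 N) 1 n
      = W * ((p+t)*(a-p+t)/(p*(a-p)))"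
    unfolding hyp_term_upper9_lower9 fp unfolding fp1 ratio W_def a_def[symmetric] e_def[symmetric] ..
  have dougall_e: "dougall_term a a1 d1 d2 N n = W * ((e+t)*(a-e+t)/(e*(a-e)))"
  proof -
    have e1: "1 + 2*a - a1 - d1 - d2 + of_nat N = e + 1" by (simp add: a_def e_def)
    show ?thesis unfolding dougall_term_def e1 W_def t_def wp_pair_e_plus1[OF e(1,3)]
      by (simp only: mult.assoc)
  qed
  have dougall_b: "dougall_term a (a1+1) d1 d2 N n = W * ((a1+t)*(a-a1+t)/(a1*(a-a1)))"
  proof -
    have e0: "1 + 2*a - (a1+1) - d1 - d2 + of_nat N = e" by (simp add: a_def e_def)
    show ?thesis unfolding dougall_term_def e0 W_def t_def vwp5_b_plus1[OF a1(1,3)]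
      by (simp only: ac_simps)
  qed
  have comb: "1 + t*(t+a)/(p*(a-p))
      = c * (1 + t*(t+a)/(e*(a-e))) + (1-c) * (1 + t*(t+a)/(a1*(a-a1)))"
    unfolding c_def by (rule affine_weight_combination) (use p a1 e w in auto)
  have dist: "x * (c*y + (1-c)*z) = c * (x*y) + (1-c) * (x*z)" for x y z :: complex
    by (simp add: algebra_simps)
  show ?thesis
    unfolding c_def[symmetric] hyp dougall_e dougall_b shifted_product_ratio[OF p(1,3)]
      shifted_product_ratio[OF a1(1,2)] shifted_product_ratio[OF e(1,2)] comb dist ..
qed

lemma sum9_dougall_combination:
  fixes f a1 p d1 d2 :: complex and N L :: nat
  defines "a \<equiv> f - 1" and "e \<equiv> 2*f - 2 - d1 - d2 - a1 + of_nat N"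
  assumes avoid: "avoids_ints [a, a-a1, a-d1, a-d2, a-a1-d1, a-a1-d2, a-d1-d2, a-a1-d1-d2, 2*a-a1-d1-d2,
                               a1, a-p] (Suc L)"
    and L: "2*N + 4 \<le> L" and p: "p \<noteq> 0" "\<forall>n\<le>N. pochhammer p n \<noteq> 0"
    and w: "a1*(a-a1) \<noteq> e*(a-e)"
  shows "(\<Sum>n\<le>N. hyp_term (upper9 f a1 p d1 d2 N) (lower9 f a1 p d1 d2 N) 1 n)
       = affine_weight (p*(a-p)) (a1*(a-a1)) (e*(a-e)) * dougall_value a a1 d1 d2 N
         + (1 - affine_weight (p*(a-p)) (a1*(a-a1)) (e*(a-e))) * dougall_value a (a1+1) d1 d2 N"
proof -
  define c where "c = affine_weight (p*(a-p)) (a1*(a-a1)) (e*(a-e))"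
  have nz: "y \<noteq> 0" if "x \<in> set [a, a-a1, a-d1, a-d2, a-a1-d1, a-a1-d2, a-d1-d2, a-a1-d1-d2,
      2*a-a1-d1-d2, a1, a-p]" "\<bar>i\<bar> \<le> int (Suc L)" "y = x + of_int i \<or> y = -(x + of_int i)" for x i y
    using avoids_intsD[OF avoid that] .
  have summand: "hyp_term (upper9 f a1 p d1 d2 N) (lower9 f a1 p d1 d2 N) 1 n
      = c * dougall_term a a1 d1 d2 N n + (1-c) * dougall_term a (a1+1) d1 d2 N n" if n: "n \<le> N" for n
  proof -
    have ap: "a - p \<noteq> 0" by (rule nz[of "a-p" 0]) auto
    have a1: "a1 \<noteq> 0" by (rule nz[of a1 0]) auto
    have a_a1: "a - a1 \<noteq> 0" by (rule nz[of "a-a1" 0]) auto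
    have aa1: "a - a1 + of_nat n \<noteq> 0" by (rule nz[of "a-a1" "int n"]) (use L n in auto)
    have e: "e \<noteq> 0"
      by (rule nz[of "2*a-a1-d1-d2" "int N"]) (use L in \<open>auto simp: e_def a_def algebra_simps\<close>)
    have ae: "a - e \<noteq> 0"
      by (rule nz[of "a-a1-d1-d2" "int N"]) (use L in \<open>auto simp: e_def a_def algebra_simps\<close>)
    have aen: "a - e + of_nat n \<noteq> 0"
      by (rule nz[of "a-a1-d1-d2" "int N - int n"]) (use L n in \<open>auto simp: e_def a_def algebra_simps\<close>)
    have pap: "pochhammer (a-p) n \<noteq> 0"
      by (rule avoids_ints_pochhammer[OF avoid, of "a-p" _ 0]) (use L n in auto)
    show ?thesis unfolding c_def a_def e_def
      by (rule hyp_term_upper9_lower9_affine[OF p(1) _ ap[unfolded a_def] pap[unfolded a_def]])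
        (use p n a1 a_a1 aa1 e ae aen w in \<open>simp_all add: a_def e_def\<close>)
  qed
  have dougall_a1: "(\<Sum>n\<le>N. dougall_term a a1 d1 d2 N n) = dougall_value a a1 d1 d2 N"
    by (rule dougall[OF avoids_ints_mono[OF _ _ avoid]]) (use L in auto)
  have dougall_a1_Suc: "(\<Sum>n\<le>N. dougall_term a (a1+1) d1 d2 N n) = dougall_value a (a1+1) d1 d2 N"
  proof (rule dougall[OF avoids_ints_mono[OF _ _ avoids_ints_minus1[OF avoid]]])
    show "set [a, a - (a1+1), a - d1, a - d2, a - (a1+1) - d1, a - (a1+1) - d2, a - d1 - d2,
        a - (a1+1) - d1 - d2, 2*a - (a1+1) - d1 - d2]
      \<subseteq> set ([a, a-a1, a-d1, a-d2, a-a1-d1, a-a1-d2, a-d1-d2, a-a1-d1-d2, 2*a-a1-d1-d2, a1, a-p]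
             @ map (\<lambda>x. x - 1) [a, a-a1, a-d1, a-d2, a-a1-d1, a-a1-d2, a-d1-d2, a-a1-d1-d2,
               2*a-a1-d1-d2, a1, a-p])"
      by (simp add: diff_diff_eq[symmetric] diff_right_commute)
  qed (use L in auto)
  have "(\<Sum>n\<le>N. hyp_term (upper9 f a1 p d1 d2 N) (lower9 f a1 p d1 d2 N) 1 n)
      = c * (\<Sum>n\<le>N. dougall_term a a1 d1 d2 N n) + (1-c) * (\<Sum>n\<le>N. dougall_term a (a1+1) d1 d2 N n)"
    by (simp add: summand sum.distrib sum_distrib_left)
  then show ?thesis unfolding dougall_a1 dougall_a1_Suc c_def .
qed

definition hpar :: "complex \<Rightarrow> complex \<Rightarrow> complex \<Rightarrow> complex \<Rightarrow> complex \<Rightarrow> complex \<Rightarrow> complex" where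
  "hpar f a1 p d1 d2 M =
     p * (f - 1 - d1 - d2 + M) * (p - f + 1) / (p * (f - p - 1) - a1 * (2 * f - 2 - d1 - d2 - a1 + M))"

definition kpar :: "complex \<Rightarrow> complex \<Rightarrow> complex \<Rightarrow> complex \<Rightarrow> complex \<Rightarrow> complex" where
  "kpar f a1 d1 d2 h =
     h * (1 + d1 + a1 - f) * (1 + d2 + a1 - f) / (d1 * d2 - h * (1 + d1 + d2 + a1 - f))"

lemma kpar_shift_ratio:
  fixes f a1 p d1 d2 M :: complex
  defines "h \<equiv> hpar f a1 p d1 d2 M" and "e \<equiv> 2*f - 2 - d1 - d2 - a1 + M"
  assumes k: "k = kpar f a1 d1 d2 h" "k \<noteq> 0"
    and hden: "p * (f - p - 1) - a1 * e \<noteq> 0"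
    and nz: "p \<noteq> 0" "f - 1 - p \<noteq> 0" "f - a1 - d1 - 1 \<noteq> 0" "f - a1 - d2 - 1 \<noteq> 0"
  shows "(k + M)/k = 1 + M*(f-a1-d1-d2-1) / ((f-a1-d1-1)*(f-a1-d2-1))
           - M*d1*d2*(p*(f-1-p) - a1*e) / (p*(f-1-p)*(f-1-d1-d2+M)*(f-a1-d1-1)*(f-a1-d2-1))"
proof -
  define X2 where "X2 = f-a1-d1-1"
  define X3 where "X3 = f-a1-d2-1"
  define X4 where "X4 = f-a1-d1-d2-1"
  define wp where "wp = p*(f-1-p)"
  define Mm where "Mm = f-1-d1-d2+M"
  have wp: "wp \<noteq> 0" unfolding wp_def using nz by simp
  have X23: "X2 \<noteq> 0" "X3 \<noteq> 0" unfolding X2_def X3_def using nz by simp_all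
  have h_eq: "h = -(wp*Mm) / (wp - a1*e)"
  proof -
    have "p * (f - p - 1) - a1 * e = wp - a1*e" "p * (f - 1 - d1 - d2 + M) * (p - f + 1) = -(wp*Mm)"
      by (simp_all add: wp_def Mm_def algebra_simps)
    then show ?thesis unfolding h_def hpar_def e_def[symmetric] by simp
  qed
  have k_eq: "k = h*X2*X3 / (d1*d2 + h*X4)"
    unfolding k kpar_def X2_def X3_def X4_def by (simp add: algebra_simps)
  have h0: "h \<noteq> 0" using k by (auto simp: k_eq)
  have Mm: "Mm \<noteq> 0" using h0 h_eq by auto
  have inv_h: "M*d1*d2/(h*X2*X3) = - (M*d1*d2*(wp - a1*e)/(wp*Mm*X2*X3))"
    unfolding h_eq using wp Mm hden X23 by (simp add: field_simps)
  have "(k + M)/k = 1 + M/k" using k(2) by (simp add: add_divide_distrib)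
  also have "\<dots> = 1 + (M*X4/(X2*X3) + M*d1*d2/(h*X2*X3))"
    unfolding k_eq using h0 X23 by (simp add: field_simps)
  also have "\<dots> = 1 + M*X4/(X2*X3) - M*d1*d2*(wp - a1*e)/(wp*Mm*X2*X3)"
    unfolding inv_h by simp
  finally show ?thesis unfolding X2_def X3_def X4_def wp_def Mm_def .
qed

lemma affine_weight_closed_form:
  fixes f a1 p d1 d2 M :: complex
  defines "a \<equiv> f - 1" and "e \<equiv> 2*f - 2 - d1 - d2 - a1 + M"
    and "X1 \<equiv> f-a1-1" and "X2 \<equiv> f-a1-d1-1" and "X3 \<equiv> f-a1-d2-1" and "X4 \<equiv> f-a1-d1-d2-1"
  assumes nz: "p*(a-p) \<noteq> 0" "a1*(a-a1) \<noteq> e*(a-e)" "X1 \<noteq> 0" "X2 \<noteq> 0" "X3 \<noteq> 0" "X4 + M \<noteq> 0"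
    "f-1-d1-d2+M \<noteq> 0"
  shows "affine_weight (p*(a-p)) (a1*(a-a1)) (e*(a-e)) * ((X2+M)/X2 * ((X3+M)/X3) * (X4/(X4+M)))
         + (1 - affine_weight (p*(a-p)) (a1*(a-a1)) (e*(a-e))) * ((X1+M)/X1)
       = 1 + M*X4/(X2*X3) - M*d1*d2*(p*(a-p) - a1*e)/(p*(a-p)*(f-1-d1-d2+M)*X2*X3)"
proof -
  define wp where "wp = p*(a-p)"
  define wb where "wb = a1*(a-a1)"
  define we where "we = e*(a-e)"
  define Mm where "Mm = f-1-d1-d2+M"
  define dd where "dd = wb - we"
  define D where "D = wp*dd*X1*X2*X3*(X4+M)*Mm"
  have dd: "dd \<noteq> 0" using nz(2) unfolding dd_def wb_def we_def by simp
  have D: "D \<noteq> 0" unfolding D_def Mm_def wp_def using nz dd by simp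
  have c: "affine_weight wp wb we = we*(wb-wp)/(wp*dd)" unfolding affine_weight_def dd_def ..
  have left: "(u/v) * (a1/b1 * (a2/b2) * (a3/b3)) * (v*X*b1*b2*b3*MM) = u*(a1*a2*a3)*X*MM"
    if "v \<noteq> 0" "b1 \<noteq> 0" "b2 \<noteq> 0" "b3 \<noteq> 0" for u v a1 b1 a2 b2 a3 b3 X MM :: complex
    using that by (simp add: field_simps)
  have right: "(1 - u/v) * (aa/b) * (v*b*c1*c2*c3*MM) = (v - u)*aa*c1*c2*c3*MM"
    if "v \<noteq> 0" "b \<noteq> 0" for u v aa b c1 c2 c3 MM :: complex
    using that by (simp add: field_simps)
  have target: "(1 + NN*Z/(Y2*Y3) - T/(W*MM*Y2*Y3)) * (W*dd*Y1*Y2*Y3*Y*MM)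
       = W*dd*Y1*Y2*Y3*Y*MM + NN*Z*W*dd*Y1*Y*MM - T*dd*Y1*Y"
    if "W \<noteq> 0" "MM \<noteq> 0" "Y2 \<noteq> 0" "Y3 \<noteq> 0" for NN Z Y1 Y2 Y3 T W MM Y dd :: complex
    using that by (simp add: field_simps)
  have L1: "affine_weight wp wb we * ((X2+M)/X2 * ((X3+M)/X3) * (X4/(X4+M))) * D
      = we*(wb-wp)*((X2+M)*(X3+M)*X4)*X1*Mm"
    unfolding c D_def mult.assoc[of wp dd, symmetric] using nz dd unfolding wp_def
    by (intro left) simp_all
  have L2: "(1 - affine_weight wp wb we) * ((X1+M)/X1) * D = (wp*dd - we*(wb-wp))*(X1+M)*X2*X3*(X4+M)*Mm"
    unfolding c D_def using nz dd unfolding wp_def by (intro right) simp_all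
  have R: "(1 + M*X4/(X2*X3) - M*d1*d2*(wp - a1*e)/(wp*Mm*X2*X3)) * D
      = wp*dd*X1*X2*X3*(X4+M)*Mm + M*X4*wp*dd*X1*(X4+M)*Mm - M*d1*d2*(wp - a1*e)*dd*X1*(X4+M)"
    unfolding D_def using nz unfolding wp_def Mm_def by (intro target) simp_all
  have "we*(wb-wp)*((X2+M)*(X3+M)*X4)*X1*Mm + (wp*dd - we*(wb-wp))*(X1+M)*X2*X3*(X4+M)*Mm
      = wp*dd*X1*X2*X3*(X4+M)*Mm + M*X4*wp*dd*X1*(X4+M)*Mm - M*d1*d2*(wp - a1*e)*dd*X1*(X4+M)"
    unfolding wp_def wb_def we_def dd_def Mm_def e_def a_def X1_def X2_def X3_def X4_def by algebra
  then have "(affine_weight wp wb we * ((X2+M)/X2 * ((X3+M)/X3) * (X4/(X4+M)))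
        + (1 - affine_weight wp wb we) * ((X1+M)/X1)) * D
      = (1 + M*X4/(X2*X3) - M*d1*d2*(wp - a1*e)/(wp*Mm*X2*X3)) * D"
    unfolding distrib_right L1 L2 R .
  then show ?thesis using D unfolding wp_def wb_def we_def Mm_def by simp
qed

definition prefactor9 :: "complex \<Rightarrow> complex \<Rightarrow> complex \<Rightarrow> complex \<Rightarrow> nat \<Rightarrow> complex" where
  "prefactor9 f a1 d1 d2 N =
     (pochhammer f N * pochhammer (f - d1 - d2) N * pochhammer (f - a1 - d1 - 1) N
        * pochhammer (f - a1 - d2 - 1) N)
     / (pochhammer (f - d1) N * pochhammer (f - d2) N * pochhammer (f - a1) N
        * pochhammer (f - a1 - d1 - d2 - 1) N)"

lemma dougall_value_plus1_eq_prefactor9: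
  fixes f a1 d1 d2 :: complex
  assumes "f-a1-1 \<noteq> 0" "pochhammer (f-a1-1) N \<noteq> 0" "pochhammer (f-a1) N \<noteq> 0"
  shows "dougall_value (f-1) (a1+1) d1 d2 N = prefactor9 f a1 d1 d2 N * ((f-a1-1 + of_nat N)/(f-a1-1))"
proof -
  have one: "1 + (f-1) = f" by simp
  have shifts: "f-(a1+1) = f-a1-1" "f-a1-1-d1 = f-a1-d1-1" "f-a1-1-d2 = f-a1-d2-1"
    "f-a1-d1-1-d2 = f-a1-d1-d2-1"
    by (simp_all add: algebra_simps)
  have "pochhammer (f-a1-1+1) N / pochhammer (f-a1-1) N = (f-a1-1 + of_nat N)/(f-a1-1)"
    using pochhammer_add1_ratio assms(1,2) .
  then have ratio: "(f-a1-1 + of_nat N)/(f-a1-1) = pochhammer (f-a1) N / pochhammer (f-a1-1) N" by simp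
  have regroup: "(A*B*C*D)/(E*F*G*H) = (A*D*B*C)/(F*G*Y*H) * (Y/E)" if "Y \<noteq> 0"
    for A B C D E F G H Y :: complex
  proof -
    have "(A*D*B*C)/(F*G*Y*H) * (Y/E) = (A*B*C*D)/(E*F*G*H) * (Y/Y)"
      by (simp add: divide_inverse inverse_mult_distrib mult_ac)
    then show ?thesis using that by simp
  qed
  show ?thesis unfolding dougall_value_def one unfolding shifts(1) unfolding shifts(2,3)
    unfolding shifts(4) ratio prefactor9_def by (rule regroup[OF assms(3)])
qed

lemma dougall_value_eq_prefactor9:
  fixes f a1 d1 d2 :: complex
  defines "X2 \<equiv> f-a1-d1-1" and "X3 \<equiv> f-a1-d2-1" and "X4 \<equiv> f-a1-d1-d2-1"
  assumes "X2 \<noteq> 0" "X3 \<noteq> 0" "X4 \<noteq> 0"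
    "pochhammer X2 N \<noteq> 0" "pochhammer X3 N \<noteq> 0" "pochhammer X4 N \<noteq> 0"
  shows "dougall_value (f-1) a1 d1 d2 N
       = prefactor9 f a1 d1 d2 N * ((X2 + of_nat N)/X2 * ((X3 + of_nat N)/X3) * (X4/(X4 + of_nat N)))"
proof -
  have one: "1 + (f-1) = f" by simp
  have X4_1: "f-a1-d1-d2 = X4+1" and X23_1: "f-a1-d1 = X2+1" "f-a1-d2 = X3+1"
    by (simp_all add: X2_def X3_def X4_def)
  have r2: "(X2 + of_nat N)/X2 = pochhammer (X2+1) N / pochhammer X2 N"
    and r3: "(X3 + of_nat N)/X3 = pochhammer (X3+1) N / pochhammer X3 N"
    using pochhammer_add1_ratio[of X2 N] pochhammer_add1_ratio[of X3 N] assms by simp_all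
  have r4: "X4/(X4 + of_nat N) = pochhammer X4 N / pochhammer (X4+1) N"
  proof -
    have "pochhammer (X4+1) N / pochhammer X4 N = (X4 + of_nat N)/X4"
      using pochhammer_add1_ratio assms(6,9) .
    then show ?thesis by (metis inverse_divide)
  qed
  have regroup: "(A*B2*B3*D)/(Y1*F*G*Y4) = (A*D*X2*X3)/(F*G*Y1*X4) * (B2/X2 * (B3/X3) * (X4/Y4))"
    if "X2 \<noteq> 0" "X3 \<noteq> 0" "X4 \<noteq> 0" for A B2 B3 D Y1 F G Y4 X2 X3 X4 :: complex
  proof -
    have "(X2/X2)*(X3/X3)*(X4/X4) = 1" using that by simp
    moreover have "(A*D*X2*X3)/(F*G*Y1*X4) * (B2/X2 * (B3/X3) * (X4/Y4))
        = (A*B2*B3*D)/(Y1*F*G*Y4) * ((X2/X2)*(X3/X3)*(X4/X4))"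
      by (simp only: divide_inverse inverse_mult_distrib mult_ac)
    ultimately show ?thesis by simp
  qed
  show ?thesis unfolding dougall_value_def one unfolding X4_1 unfolding X23_1
    unfolding r2 r3 r4 prefactor9_def X2_def[symmetric] X3_def[symmetric] X4_def[symmetric]
    by (rule regroup) (use assms in simp_all)
qed

lemma sum9_closed_form_generic:
  fixes f a1 p d1 d2 :: complex and N L :: nat
  defines "a \<equiv> f - 1" and "e \<equiv> 2*f - 2 - d1 - d2 - a1 + of_nat N"
    and "k \<equiv> kpar f a1 d1 d2 (hpar f a1 p d1 d2 (of_nat N))"
  assumes avoid: "avoids_ints [a, a-a1, a-d1, a-d2, a-a1-d1, a-a1-d2, a-d1-d2, a-a1-d1-d2, 2*a-a1-d1-d2,
                               a1, a-p] (Suc L)"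
    and L: "2*N + 4 \<le> L" and p: "p \<noteq> 0" "\<forall>n\<le>N. pochhammer p n \<noteq> 0"
    and w: "a1*(a-a1) \<noteq> e*(a-e)" and hden: "p * (f - p - 1) - a1 * e \<noteq> 0"
    and k: "pochhammer k N \<noteq> 0" and N: "N > 0"
  shows "(\<Sum>n\<le>N. hyp_term (upper9 f a1 p d1 d2 N) (lower9 f a1 p d1 d2 N) 1 n)
       = prefactor9 f a1 d1 d2 N * (pochhammer (k + 1) N / pochhammer k N)"
proof -
  let ?M = "of_nat N :: complex"
  let ?c = "affine_weight (p*(a-p)) (a1*(a-a1)) (e*(a-e))"
  have nz: "y \<noteq> 0" if "x \<in> set [a-a1, a-a1-d1, a-a1-d2, a-a1-d1-d2, a-p]" "\<bar>i\<bar> \<le> int (Suc L)"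
    "y = x + of_int i" for x i y
    using avoids_intsD[OF avoid _ that(2)] that(1,3) by auto
  have poch: "pochhammer y N \<noteq> 0" if "x \<in> set [a-a1, a-a1-d1, a-a1-d2, a-a1-d1-d2]" "y = x + of_int i"
    "i \<in> {0, 1}" for x i y
    using avoids_ints_pochhammer[OF avoid _ that(2)] that(1,3) L by auto
  have X1: "f-a1-1 \<noteq> 0" "pochhammer (f-a1-1) N \<noteq> 0" "pochhammer (f-a1) N \<noteq> 0"
    by (rule nz[of "a-a1" 0] poch[of "a-a1" _ 0] poch[of "a-a1" _ 1]; simp add: a_def)+
  have X2: "f-a1-d1-1 \<noteq> 0" "pochhammer (f-a1-d1-1) N \<noteq> 0"
    by (rule nz[of "a-a1-d1" 0] poch[of "a-a1-d1" _ 0]; simp add: a_def)+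
  have X3: "f-a1-d2-1 \<noteq> 0" "pochhammer (f-a1-d2-1) N \<noteq> 0"
    by (rule nz[of "a-a1-d2" 0] poch[of "a-a1-d2" _ 0]; simp add: a_def)+
  have X4: "f-a1-d1-d2-1 \<noteq> 0" "pochhammer (f-a1-d1-d2-1) N \<noteq> 0" "f-a1-d1-d2-1 + ?M \<noteq> 0"
    by (rule nz[of "a-a1-d1-d2" 0] poch[of "a-a1-d1-d2" _ 0] nz[of "a-a1-d1-d2" "int N"];
        use L in \<open>simp add: a_def\<close>)+
  have ap: "f-1-p \<noteq> 0" by (rule nz[of "a-p" 0]) (simp_all add: a_def)
  have k0: "k \<noteq> 0" using k N by (auto simp: pochhammer_0_left)
  have Mm: "f-1-d1-d2+?M \<noteq> 0" using k0 by (auto simp: k_def kpar_def hpar_def)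
  let ?re = "(f-a1-d1-1 + ?M)/(f-a1-d1-1) * ((f-a1-d2-1 + ?M)/(f-a1-d2-1))
             * ((f-a1-d1-d2-1)/(f-a1-d1-d2-1 + ?M))"
  let ?rb = "(f-a1-1 + ?M)/(f-a1-1)"
  have dist: "x * (P*y) + (1-x) * (P*z) = P * (x*y + (1-x)*z)" for x y z P :: complex
    by (simp add: algebra_simps)
  have "(\<Sum>n\<le>N. hyp_term (upper9 f a1 p d1 d2 N) (lower9 f a1 p d1 d2 N) 1 n)
      = ?c * dougall_value a a1 d1 d2 N + (1 - ?c) * dougall_value a (a1+1) d1 d2 N"
    unfolding a_def e_def
    by (rule sum9_dougall_combination[OF avoid[unfolded a_def] L p w[unfolded a_def e_def]])
  also have "\<dots> = prefactor9 f a1 d1 d2 N * (?c * ?re + (1 - ?c) * ?rb)"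
    unfolding a_def dougall_value_eq_prefactor9[OF X2(1) X3(1) X4(1) X2(2) X3(2) X4(2)]
      dougall_value_plus1_eq_prefactor9[OF X1] dist ..
  also have "?c * ?re + (1 - ?c) * ?rb = (k + ?M)/k"
    unfolding a_def e_def
      kpar_shift_ratio[OF k_def[THEN meta_eq_to_obj_eq] k0 hden[unfolded e_def] p(1) ap X2(1) X3(1)]
    by (rule affine_weight_closed_form) (use p ap w X1 X2 X3 X4 Mm in \<open>simp_all add: a_def e_def\<close>)
  also have "(k + ?M)/k = pochhammer (k + 1) N / pochhammer k N"
    using pochhammer_add1_ratio[OF k0 k] by simp
  finally show ?thesis .
qed

section \<open>Removing the genericity assumptions\<close>

lemma hypF_eq_sum_if_neg_nat_param:
  assumes "- of_nat N \<in> set as"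
  shows "hypF as bs z = (\<Sum>n\<le>N. hyp_term as bs z n)"
  unfolding hypF_def
proof (rule suminf_finite)
  fix n assume "n \<notin> {..N}"
  then have "pochhammer (- of_nat N :: complex) n = 0" by (simp add: pochhammer_of_nat_eq_0_lemma)
  then have "(\<Prod>a\<leftarrow>as. pochhammer a n) = 0" using assms by (auto simp: prod_list_zero_iff)
  then show "hyp_term as bs z n = 0" by (simp add: hyp_term_def)
qed simp

lemma pochhammer_nonzero_if_not_nonpos_int: "\<not> nonpos_int b \<Longrightarrow> pochhammer b n \<noteq> 0"
  unfolding nonpos_int_def by (auto simp: pochhammer_eq_0_iff)

lemma tendsto_pochhammer [tendsto_intros]:
  "(g \<longlongrightarrow> (a::complex)) F \<Longrightarrow> ((\<lambda>x. pochhammer (g x) n) \<longlongrightarrow> pochhammer a n) F"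
  by (rule isCont_tendsto_compose[OF isCont_pochhammer])

lemma eventually_nonzero_linear:
  fixes c s :: complex
  assumes "s \<noteq> 0"
  shows "eventually (\<lambda>t. c + s*t \<noteq> 0) (at 0)"
proof (cases "c = 0")
  case True
  then show ?thesis using assms by (simp add: eventually_at_filter)
next
  case False
  have "((\<lambda>t. c + s*t) \<longlongrightarrow> c + s*0) (at 0)" by (intro tendsto_intros)
  then show ?thesis using False by (intro tendsto_imp_eventually_ne) simp_all
qed

lemma eventually_nonzero_quadratic:
  fixes q0 q1 q2 :: complex
  assumes "q2 \<noteq> 0"
  shows "eventually (\<lambda>t. q0 + q1*t + q2*t^2 \<noteq> 0) (at 0)"
proof (cases "q0 = 0")
  case False
  have "((\<lambda>t. q0 + q1*t + q2*t^2) \<longlongrightarrow> q0 + q1*0 + q2*0^2) (at 0)" by (intro tendsto_intros)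
  then show ?thesis using False by (intro tendsto_imp_eventually_ne) simp_all
next
  case True
  have "eventually (\<lambda>t. q1 + q2*t \<noteq> 0) (at 0)" by (rule eventually_nonzero_linear[OF assms])
  moreover have "eventually (\<lambda>t::complex. t \<noteq> 0) (at 0)" by (simp add: eventually_at_filter)
  ultimately show ?thesis
  proof eventually_elim
    case (elim t)
    have "q0 + q1*t + q2*t^2 = t*(q1 + q2*t)" using True by (simp add: power2_eq_square algebra_simps)
    then show ?case using elim by simp
  qed
qed

lemma eventually_nonzero_near_0:
  "(g \<longlongrightarrow> g 0) (at 0) \<Longrightarrow> g 0 \<noteq> (0::complex) \<Longrightarrow> eventually (\<lambda>t. g t \<noteq> 0) (at 0)"
  by (rule tendsto_imp_eventually_ne)

lemma eventually_avoids_ints: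
  assumes "\<forall>cs\<in>set ps. snd cs \<noteq> (0::complex)"
  shows "eventually (\<lambda>t. avoids_ints (map (\<lambda>cs. fst cs + snd cs * t) ps) L) (at 0)"
proof -
  have "eventually (\<lambda>t. \<forall>cs\<in>set ps. \<forall>i\<in>{-int L..int L}. fst cs + snd cs * t + of_int i \<noteq> 0) (at 0)"
  proof (intro eventually_ball_finite ballI)
    fix cs i assume "cs \<in> set ps"
    then have "eventually (\<lambda>t. (fst cs + of_int i) + snd cs * t \<noteq> 0) (at 0)"
      using assms by (intro eventually_nonzero_linear) auto
    then show "eventually (\<lambda>t. fst cs + snd cs * t + of_int i \<noteq> 0) (at 0)"
      by (simp add: algebra_simps)
  qed auto
  then show ?thesis
    by (rule eventually_mono) (force simp: avoids_ints_def)
qed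

definition sum9 :: "complex \<Rightarrow> complex \<Rightarrow> complex \<Rightarrow> complex \<Rightarrow> complex \<Rightarrow> nat \<Rightarrow> complex" where
  "sum9 f a1 p d1 d2 N = (\<Sum>n\<le>N. hyp_term (upper9 f a1 p d1 d2 N) (lower9 f a1 p d1 d2 N) 1 n)"

definition closed9 :: "complex \<Rightarrow> complex \<Rightarrow> complex \<Rightarrow> complex \<Rightarrow> complex \<Rightarrow> nat \<Rightarrow> complex" where
  "closed9 f a1 p d1 d2 N =
     prefactor9 f a1 d1 d2 N * (pochhammer (kpar f a1 d1 d2 (hpar f a1 p d1 d2 (of_nat N)) + 1) N
                                / pochhammer (kpar f a1 d1 d2 (hpar f a1 p d1 d2 (of_nat N))) N)"

text \<open>Moving \<open>(f, a1, d1, d2)\<close> along the direction \<open>(1, 10, 100, 1000)\<close> makes every linear form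
  that has to avoid the integers non-constant, and gives the quadratic \<open>a1 (a - a1) - e (a - e)\<close>
  the leading coefficient \<open>1108 \<cdot> 1109 - 10 \<cdot> 9 = 1228682\<close>; so all genericity hypotheses
  hold for small \<open>t \<noteq> 0\<close>.\<close>

lemma sum9_eq_closed9_perturbed:
  fixes f a1 p d1 d2 :: complex and N :: nat
  assumes p: "p \<noteq> 0" "\<forall>n\<le>N. pochhammer p n \<noteq> 0" and N: "N > 0"
    and hden: "p * (f - p - 1) - a1 * (2 * f - 2 - d1 - d2 - a1 + of_nat N) \<noteq> 0"
    and kden: "d1 * d2 - hpar f a1 p d1 d2 (of_nat N) * (1 + d1 + d2 + a1 - f) \<noteq> 0"
    and k: "pochhammer (kpar f a1 d1 d2 (hpar f a1 p d1 d2 (of_nat N))) N \<noteq> 0"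
  shows "eventually (\<lambda>t. sum9 (f+t) (a1+10*t) p (d1+100*t) (d2+1000*t) N
                       = closed9 (f+t) (a1+10*t) p (d1+100*t) (d2+1000*t) N) (at 0)"
proof -
  define F where "F t = f + t" for t :: complex
  define A where "A t = a1 + 10*t" for t :: complex
  define E1 where "E1 t = d1 + 100*t" for t :: complex
  define E2 where "E2 t = d2 + 1000*t" for t :: complex
  define H where "H t = hpar (F t) (A t) p (E1 t) (E2 t) (of_nat N)" for t
  have at0: "F 0 = f" "A 0 = a1" "E1 0 = d1" "E2 0 = d2" by (simp_all add: F_def A_def E1_def E2_def)
  have tendsto: "(F \<longlongrightarrow> F 0) (at 0)" "(A \<longlongrightarrow> A 0) (at 0)" "(E1 \<longlongrightarrow> E1 0) (at 0)" "(E2 \<longlongrightarrow> E2 0) (at 0)"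
    unfolding F_def A_def E1_def E2_def by (intro tendsto_intros)+
  have tH: "(H \<longlongrightarrow> H 0) (at 0)" unfolding H_def hpar_def
    by (intro tendsto_intros tendsto) (use hden in \<open>simp add: at0\<close>)
  let ?avoid = "\<lambda>t. avoids_ints [F t-1, F t-1-A t, F t-1-E1 t, F t-1-E2 t, F t-1-A t-E1 t, F t-1-A t-E2 t,
      F t-1-E1 t-E2 t, F t-1-A t-E1 t-E2 t, 2*(F t-1)-A t-E1 t-E2 t, A t, F t-1-p] (Suc (2*N+4))"
  have ev_avoid: "eventually ?avoid (at 0)"
  proof -
    have perturbed: "[F t-1, F t-1-A t, F t-1-E1 t, F t-1-E2 t, F t-1-A t-E1 t, F t-1-A t-E2 t,
        F t-1-E1 t-E2 t, F t-1-A t-E1 t-E2 t, 2*(F t-1)-A t-E1 t-E2 t, A t, F t-1-p]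
      = map (\<lambda>cs. fst cs + snd cs * t) [(f-1, 1), (f-1-a1, -9), (f-1-d1, -99), (f-1-d2, -999),
          (f-1-a1-d1, -109), (f-1-a1-d2, -1009), (f-1-d1-d2, -1099), (f-1-a1-d1-d2, -1109),
          (2*(f-1)-a1-d1-d2, -1108), (a1, 10), (f-1-p, 1)]" for t
      by (simp add: F_def A_def E1_def E2_def algebra_simps)
    have "eventually (\<lambda>t. avoids_ints (map (\<lambda>cs. fst cs + snd cs * t) [(f-1, 1), (f-1-a1, -9),
        (f-1-d1, -99), (f-1-d2, -999), (f-1-a1-d1, -109), (f-1-a1-d2, -1009), (f-1-d1-d2, -1099),
        (f-1-a1-d1-d2, -1109), (2*(f-1)-a1-d1-d2, -1108), (a1, 10), (f-1-p, 1)]) (Suc (2*N+4))) (at 0)"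
      by (rule eventually_avoids_ints) simp
    then show ?thesis unfolding perturbed .
  qed
  have ev_w: "eventually (\<lambda>t. A t*(F t-1-A t)
      \<noteq> (2*F t-2-E1 t-E2 t-A t+of_nat N)*(F t-1-(2*F t-2-E1 t-E2 t-A t+of_nat N))) (at 0)"
  proof -
    define e where "e = 2*f-2-d1-d2-a1+of_nat N"
    define q1 where "q1 = 10*(f-1-a1)-9*a1-1109*e+1108*(f-1-e)"
    have "A t*(F t-1-A t) - (2*F t-2-E1 t-E2 t-A t+of_nat N)*(F t-1-(2*F t-2-E1 t-E2 t-A t+of_nat N))
        = (a1*(f-1-a1)-e*(f-1-e)) + q1*t + 1228682*t^2" for t
      unfolding q1_def e_def F_def A_def E1_def E2_def by (simp add: power2_eq_square algebra_simps)
    moreover have "eventually (\<lambda>t. (a1*(f-1-a1)-e*(f-1-e)) + q1*t + 1228682*t^2 \<noteq> 0) (at 0)"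
      by (rule eventually_nonzero_quadratic) simp
    ultimately show ?thesis by (elim eventually_mono) (metis right_minus_eq)
  qed
  have ev_hden:
    "eventually (\<lambda>t. p * (F t - p - 1) - A t * (2 * F t - 2 - E1 t - E2 t - A t + of_nat N) \<noteq> 0) (at 0)"
    by (rule eventually_nonzero_near_0, intro tendsto_intros tendsto) (use hden in \<open>simp add: at0\<close>)
  have ev_k: "eventually (\<lambda>t. pochhammer (kpar (F t) (A t) (E1 t) (E2 t) (H t)) N \<noteq> 0) (at 0)"
    by (rule eventually_nonzero_near_0, unfold kpar_def, intro tendsto_intros tendsto tH)
      (use kden k in \<open>simp_all add: at0 H_def kpar_def\<close>)
  from ev_avoid ev_w ev_hden ev_k show ?thesis
  proof eventually_elim
    case (elim t)
    show ?case unfolding sum9_def closed9_def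
      by (rule sum9_closed_form_generic[OF elim(1) _ p elim(2,3) elim(4)[unfolded H_def] N,
            unfolded F_def A_def E1_def E2_def]) simp
  qed
qed

lemma sum9_eq_closed9:
  fixes f a1 p d1 d2 :: complex and N :: nat
  assumes lower: "\<forall>b\<in>set (lower9 f a1 p d1 d2 N). \<not> nonpos_int b"
    and hden: "p * (f - p - 1) - a1 * (2 * f - 2 - d1 - d2 - a1 + of_nat N) \<noteq> 0"
    and kden: "d1 * d2 - hpar f a1 p d1 d2 (of_nat N) * (1 + d1 + d2 + a1 - f) \<noteq> 0"
    and rhs_den: "pochhammer (f - a1 - d1 - d2 - 1) N \<noteq> 0"
      "pochhammer (kpar f a1 d1 d2 (hpar f a1 p d1 d2 (of_nat N))) N \<noteq> 0"
  shows "sum9 f a1 p d1 d2 N = closed9 f a1 p d1 d2 N"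
proof (cases "N = 0")
  case True
  then show ?thesis by (simp add: sum9_def closed9_def hyp_term_def prefactor9_def upper9_def lower9_def)
next
  case False
  define S where "S t = sum9 (f+t) (a1+10*t) p (d1+100*t) (d2+1000*t) N" for t
  define C where "C t = closed9 (f+t) (a1+10*t) p (d1+100*t) (d2+1000*t) N" for t
  have lw: "\<not> nonpos_int ((f - 1) / 2)" "\<not> nonpos_int (f - a1)" "\<not> nonpos_int p" "\<not> nonpos_int (f-p-1)"
    "\<not> nonpos_int (f-d1)" "\<not> nonpos_int (f-d2)" "\<not> nonpos_int (2 + a1 + d1 + d2 - f - of_nat N)"
    "\<not> nonpos_int (f + of_nat N)" using lower by (simp_all add: lower9_def)
  have p: "p \<noteq> 0" "\<forall>n\<le>N. pochhammer p n \<noteq> 0"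
    using lw(3) pochhammer_nonzero_if_not_nonpos_int[OF lw(3)] by (force simp: nonpos_int_def)+
  have S: "(S \<longlongrightarrow> S 0) (at 0)"
    unfolding S_def sum9_def upper9_def lower9_def hyp_term_def list.map prod_list.Cons prod_list.Nil
    by (intro tendsto_intros) (use lw in \<open>simp_all add: pochhammer_nonzero_if_not_nonpos_int\<close>)
  have C: "(C \<longlongrightarrow> C 0) (at 0)"
    unfolding C_def closed9_def prefactor9_def kpar_def hpar_def
    by (intro tendsto_intros)
      (use lw hden kden rhs_den in
        \<open>simp_all add: pochhammer_nonzero_if_not_nonpos_int kpar_def hpar_def\<close>)
  have "eventually (\<lambda>t. S t = C t) (at 0)"
    unfolding S_def C_def using sum9_eq_closed9_perturbed[OF p _ hden kden rhs_den(2)] False by simp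
  then have "(C \<longlongrightarrow> S 0) (at 0)" using S tendsto_cong by blast
  then have "S 0 = C 0" using C by (intro tendsto_unique[OF at_neq_bot])
  then show ?thesis by (simp add: S_def C_def)
qed

theorem mainTheorem3:
  fixes N :: nat and f a1 p d1 d2 h k :: complex
  assumes lower: "\<forall>b\<in>set [(f - 1) / 2, f - a1, p, f - p - 1, f - d1, f - d2,
                        2 + a1 + d1 + d2 - f - of_nat N, f + of_nat N]. \<not> nonpos_int b"
    and hden: "p * (f - p - 1) - a1 * (2 * f - 2 - d1 - d2 - a1 + of_nat N) \<noteq> 0"
    and h_def: "h = p * (f - 1 - d1 - d2 + of_nat N) * (p - f + 1) /
                   (p * (f - p - 1) - a1 * (2 * f - 2 - d1 - d2 - a1 + of_nat N))"
    and kden: "d1 * d2 - h * (1 + d1 + d2 + a1 - f) \<noteq> 0"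
    and k_def: "k = h * (1 + d1 + a1 - f) * (1 + d2 + a1 - f) /
                   (d1 * d2 - h * (1 + d1 + d2 + a1 - f))"
    and rhs_den: "pochhammer (f - a1 - d1 - d2 - 1) N \<noteq> 0" "pochhammer k N \<noteq> 0"
  shows "hypF [f - 1, (f + 1) / 2, a1, f - p, p + 1, d1, d2,
               2 * f - 2 - d1 - d2 - a1 + of_nat N, - of_nat N]
              [(f - 1) / 2, f - a1, p, f - p - 1, f - d1, f - d2,
               2 + a1 + d1 + d2 - f - of_nat N, f + of_nat N] 1
         = (pochhammer f N * pochhammer (f - d1 - d2) N * pochhammer (f - a1 - d1 - 1) N
              * pochhammer (f - a1 - d2 - 1) N)
           / (pochhammer (f - d1) N * pochhammer (f - d2) N * pochhammer (f - a1) N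
              * pochhammer (f - a1 - d1 - d2 - 1) N)
           * (pochhammer (k + 1) N / pochhammer k N)"
proof -
  have h: "h = hpar f a1 p d1 d2 (of_nat N)" and k: "k = kpar f a1 d1 d2 h"
    unfolding h_def k_def hpar_def kpar_def by rule+
  have "hypF (upper9 f a1 p d1 d2 N) (lower9 f a1 p d1 d2 N) 1 = sum9 f a1 p d1 d2 N"
    unfolding sum9_def by (rule hypF_eq_sum_if_neg_nat_param) (simp add: upper9_def)
  also have "\<dots> = closed9 f a1 p d1 d2 N"
    by (rule sum9_eq_closed9) (use lower hden kden rhs_den in \<open>simp_all add: lower9_def h k\<close>)
  finally show ?thesis
    unfolding upper9_def lower9_def closed9_def prefactor9_def h[symmetric] k[symmetric] .
qed

end
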